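(* Let $f:[0,\infty)\to[0,\infty)$ be non-increasing with $f(0)=1$ and $f\in C^4([0,\infty))$, let $\mathcal L(\gamma)=\int_0^\infty e^{-\gamma x}f(x)dx$ and $\gamma_{\min}=\inf\{\gamma\in\mathbb R:\mathcal L(\gamma)<\infty\}$, and assume that for every $\gamma>\gamma_{\min}$ and $j=0,1,2,3,4$, $e^{-\gamma x}f^{(j)}(x)\in L^1([0,\infty))$ and $e^{-\gamma x}f^{(j)}(x)\to0$ as $x\to\infty$. For $s\ge1$ and $\rho=1-\gamma/\sqrt s$ define $F_s(\rho)=\sum_{n=0}^\infty f\bigl(\tfrac{n+1}{\sqrt s}\bigr)\rho^{n+1}$ and $\gamma_s=-\sqrt s\ln(1-\gamma/\sqrt s)$. Then for $\gamma_{\min}<\gamma\le\sqrt s$, $F_s(\rho)=\sqrt s\,\mathcal L(\gamma_s)-\tfrac12+O(1/\sqrt s)$, where the $O(1/\sqrt s)$ holds uniformly in $\gamma$ in any compact subset of $(\gamma_{\min},\infty)$.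
   Context: $F_s(\rho)$ is the quantity $\sum_{n\ge0}p_s(0)\cdots p_s(n)\rho^{n+1}$ for an $s$-server system with admission control under the global control $p_s(0)\cdots p_s(n)=f((n+1)/\sqrt s)$. *)

theory Defs
  imports "HOL-Analysis.Analysis"
begin

definition laplace :: "(real \<Rightarrow> real) \<Rightarrow> real \<Rightarrow> ennreal" where
  "laplace f \<gamma> = (\<integral>\<^sup>+ x. ennreal (exp (- \<gamma> * x) * f x) * indicator {0..} x \<partial>lborel)"

definition gamma_min :: "(real \<Rightarrow> real) \<Rightarrow> ereal" where
  "gamma_min f = Inf {ereal \<gamma> | \<gamma>. laplace f \<gamma> < \<infinity>}"

definition F_s :: "(real \<Rightarrow> real) \<Rightarrow> real \<Rightarrow> real \<Rightarrow> real" where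
  "F_s f s \<rho> = (\<Sum>n. f (real (n + 1) / sqrt s) * \<rho> ^ (n + 1))"

definition gamma_s :: "real \<Rightarrow> real \<Rightarrow> real" where
  "gamma_s s \<gamma> = - sqrt s * ln (1 - \<gamma> / sqrt s)"

end

theory Submission
  imports Defs
begin

text \<open>Put \<open>h = 1 / sqrt s\<close> and \<open>c = gamma_s s \<gamma>\<close>. Then \<open>\<rho> ^ (n + 1) = exp (- c (n + 1) h)\<close>, so
  \<open>h F\<^sub>s(\<rho>)\<close> is the right-endpoint Riemann sum, with step \<open>h\<close>, of \<open>g(x) = exp (- c x) f x\<close>,
  whose integral over \<open>[0,\<infinity>)\<close> is \<open>\<L>(c)\<close>. Comparing with the trapezoid rule, whose error on a
  cell of length \<open>h\<close> is at most \<open>h\<^sup>2/8\<close> times the integral of \<open>\<bar>g''\<bar>\<close> over it, gives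
  \<open>F\<^sub>s(\<rho>) = \<L>(c)/h - g(0)/2 + O(h \<integral>\<bar>g''\<bar>)\<close>. For \<open>\<gamma>\<close> in a compact \<open>K\<close> we have
  \<open>c \<ge> \<gamma> \<ge> min K\<close>, and while \<open>c\<close> stays bounded, \<open>\<bar>g''\<bar>\<close> has an integrable majorant independent
  of \<open>c\<close>. Large \<open>c\<close> forces \<open>sqrt s\<close> to be bounded, and then the bound
  \<open>0 \<le> F\<^sub>s(\<rho>) \<le> \<L>(c)/h\<close> from the monotonicity of \<open>g\<close> gives an error \<open>O(1) = O(1/sqrt s)\<close>.\<close>

lemma trapezoid_interval_error:
  fixes g g' g'' W :: "real \<Rightarrow> real" and u v :: real
  assumes uv: "u \<le> v"
    and g': "\<And>t. t \<in> {u..v} \<Longrightarrow> (g has_real_derivative g' t) (at t within {u..v})"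
    and g'': "\<And>t. t \<in> {u..v} \<Longrightarrow> (g' has_real_derivative g'' t) (at t within {u..v})"
    and W: "W integrable_on {u..v}" "\<And>t. t \<in> {u..v} \<Longrightarrow> \<bar>g'' t\<bar> \<le> W t"
  shows "\<bar>integral {u..v} g - (v - u) * (g u + g v) / 2\<bar> \<le> (v - u)^2 / 8 * integral {u..v} W"
proof -
  \<comment> \<open>Integrate by parts twice against the kernel \<open>(t - u) (v - t) / 2\<close>, which vanishes at both ends.\<close>
  define H where "H t = (t - u) * (v - t) / 2 * g' t - (u + v - 2 * t) / 2 * g t" for t
  have "(H has_real_derivative ((t - u) * (v - t) / 2 * g'' t + g t)) (at t within {u..v})"
    if "t \<in> {u..v}" for t
    unfolding H_def by (rule derivative_eq_intros g' g'' that refl | simp add: field_simps)+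
  then have FTC: "((\<lambda>t. (t - u) * (v - t) / 2 * g'' t + g t) has_integral (H v - H u)) {u..v}"
    by (intro fundamental_theorem_of_calculus[OF uv])
       (auto simp: has_real_derivative_iff_has_vector_derivative)
  have H_ends: "H v - H u = (v - u) * (g u + g v) / 2"
    unfolding H_def by (simp add: field_simps)
  have "(g has_integral integral {u..v} g) {u..v}"
    using integrable_continuous_interval[OF DERIV_continuous_on[OF g']] by blast
  from has_integral_diff[OF FTC this]
  have kernel: "((\<lambda>t. (t - u) * (v - t) / 2 * g'' t)
      has_integral ((v - u) * (g u + g v) / 2 - integral {u..v} g)) {u..v}"
    unfolding H_ends by simp
  have "norm (integral {u..v} (\<lambda>t. (t - u) * (v - t) / 2 * g'' t))
        \<le> integral {u..v} (\<lambda>t. (v - u)^2 / 8 * W t)"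
  proof (rule integral_norm_bound_integral)
    show "(\<lambda>t. (t - u) * (v - t) / 2 * g'' t) integrable_on {u..v}"
      using kernel by blast
    show "(\<lambda>t. (v - u)^2 / 8 * W t) integrable_on {u..v}"
      using integrable_cmul[OF W(1), of "(v - u)^2 / 8"] by simp
  next
    fix t assume t: "t \<in> {u..v}"
    have "0 \<le> (t - u) * (v - t)" using t by auto
    moreover have "(t - u) * (v - t) \<le> (v - u)^2 / 4"
      using zero_le_power2[of "(t - u) - (v - t)"] by (simp add: power2_eq_square field_simps)
    ultimately have "(t - u) * (v - t) / 2 * \<bar>g'' t\<bar> \<le> (v - u)^2 / 8 * W t"
      using mult_mono[OF _ W(2)[OF t], of "(t - u) * (v - t) / 2" "(v - u)^2 / 8"] by simp
    then show "norm ((t - u) * (v - t) / 2 * g'' t) \<le> (v - u)^2 / 8 * W t"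
      using t by (simp add: abs_mult)
  qed
  then have "\<bar>(v - u) * (g u + g v) / 2 - integral {u..v} g\<bar> \<le> (v - u)^2 / 8 * integral {u..v} W"
    unfolding integral_unique[OF kernel] by simp
  then show ?thesis by (simp add: abs_minus_commute)
qed

lemma tendsto_integral_initial_segments:
  fixes g :: "real \<Rightarrow> real"
  assumes g: "g integrable_on {0..}" "\<And>t. 0 \<le> t \<Longrightarrow> 0 \<le> g t" and h: "0 < h"
  shows "(\<lambda>N. integral {0..real N * h} g) \<longlonglongrightarrow> integral {0..} g"
proof -
  define g\<^sub>N where "g\<^sub>N N x = (if x \<in> {0..real N * h} then g x else 0)" for N x
  have segment: "{0..real N * h} \<inter> {0..} = {0..real N * h}" for N by auto
  have integral_g\<^sub>N: "integral {0..} (g\<^sub>N N) = integral {0..real N * h} g" for N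
    unfolding g\<^sub>N_def integral_restrict_Int segment ..
  have g_segment: "g integrable_on {0..b}" for b
    by (rule integrable_on_subinterval[OF g(1)]) auto
  have "(\<lambda>N. integral {0..} (g\<^sub>N N)) \<longlonglongrightarrow> integral {0..} g"
  proof (rule monotone_convergence_increasing[THEN conjunct2])
    show "g\<^sub>N N integrable_on {0..}" for N
      unfolding g\<^sub>N_def integrable_restrict_Int segment by (rule g_segment)
    show "g\<^sub>N N x \<le> g\<^sub>N (Suc N) x" if "x \<in> {0..}" for N x
    proof -
      have "real N * h \<le> real (Suc N) * h" using h by (intro mult_right_mono) auto
      then show ?thesis using that g(2)[of x] unfolding g\<^sub>N_def by auto
    qed
    show "(\<lambda>N. g\<^sub>N N x) \<longlonglongrightarrow> g x" if "x \<in> {0..}" for x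
    proof (rule tendsto_eventually)
      obtain N\<^sub>0 where N\<^sub>0: "x < real N\<^sub>0 * h" using ex_less_of_nat_mult[OF h] by blast
      show "eventually (\<lambda>N. g\<^sub>N N x = g x) sequentially"
        unfolding eventually_sequentially
      proof (intro exI allI impI)
        fix N assume "N\<^sub>0 \<le> N"
        then have "real N\<^sub>0 * h \<le> real N * h" using h by (intro mult_right_mono) auto
        then show "g\<^sub>N N x = g x" using N\<^sub>0 that by (auto simp: g\<^sub>N_def)
      qed
    qed
    have "\<bar>integral {0..real N * h} g\<bar> \<le> integral {0..} g" for N
      using integral_nonneg[OF g_segment, of "real N * h"]
        integral_subset_le[of "{0..real N * h}" "{0..}" g] g g_segment by auto
    then show "bounded (range (\<lambda>N. integral {0..} (g\<^sub>N N)))"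
      unfolding bounded_real integral_g\<^sub>N by blast
  qed
  then show ?thesis unfolding integral_g\<^sub>N .
qed

lemma trapezoid_partial_sums_error:
  fixes g g' g'' W :: "real \<Rightarrow> real" and h :: real
  assumes h: "0 < h"
    and g': "\<And>t. 0 \<le> t \<Longrightarrow> (g has_real_derivative g' t) (at t within {0..})"
    and g'': "\<And>t. 0 \<le> t \<Longrightarrow> (g' has_real_derivative g'' t) (at t within {0..})"
    and W: "W integrable_on {0..}" "\<And>t. 0 \<le> t \<Longrightarrow> \<bar>g'' t\<bar> \<le> W t"
  shows "\<bar>h * (\<Sum>n<N. g (real (n + 1) * h)) + h * (g 0 - g (real N * h)) / 2
            - integral {0..real N * h} g\<bar> \<le> h^2 / 8 * integral {0..real N * h} W"
proof (induction N)
  case 0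
  then show ?case by simp
next
  case (Suc N)
  define a where "a = real N * h"
  define b where "b = real (Suc N) * h"
  have ab: "0 \<le> a" "a \<le> b" "b - a = h"
    using h by (auto simp: a_def b_def algebra_simps)
  have "continuous_on {0..} g"
    by (rule DERIV_continuous_on) (use g' in auto)
  then have "g integrable_on {0..b}"
    by (rule integrable_continuous_interval[OF continuous_on_subset]) auto
  then have split_g: "integral {0..b} g = integral {0..a} g + integral {a..b} g"
    by (rule Henstock_Kurzweil_Integration.integral_combine[OF ab(1,2), symmetric])
  have "W integrable_on {0..b}"
    by (rule integrable_on_subinterval[OF W(1)]) auto
  then have split_W: "integral {0..b} W = integral {0..a} W + integral {a..b} W"
    by (rule Henstock_Kurzweil_Integration.integral_combine[OF ab(1,2), symmetric])
  have sub: "{a..b} \<subseteq> {0..}" using ab by auto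
  have cell: "\<bar>integral {a..b} g - h * (g a + g b) / 2\<bar> \<le> h^2 / 8 * integral {a..b} W"
    using trapezoid_interval_error[OF ab(2), of g g' g'' W] ab(1,3)
      DERIV_subset[OF g' sub] DERIV_subset[OF g'' sub] W(2)
      integrable_on_subinterval[OF W(1) sub] by auto
  have sum_step: "h * (\<Sum>n<Suc N. g (real (n + 1) * h)) = h * (\<Sum>n<N. g (real (n + 1) * h)) + h * g b"
    by (simp add: b_def distrib_left)
  have end_terms: "h * (g 0 - g b) / 2 = h * (g 0 - g a) / 2 + h * (g a + g b) / 2 - h * g b"
    by (simp add: field_simps)
  have scaled_split_W:
    "h^2 / 8 * integral {0..b} W = h^2 / 8 * integral {0..a} W + h^2 / 8 * integral {a..b} W"
    unfolding split_W by (simp add: distrib_left)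
  show ?case
    unfolding b_def[symmetric] sum_step
    using Suc.IH[folded a_def] cell split_g scaled_split_W end_terms
    unfolding abs_le_iff by linarith
qed

lemma trapezoid_samples_summable:
  fixes g g' g'' W :: "real \<Rightarrow> real" and h :: real
  assumes h: "0 < h"
    and g': "\<And>t. 0 \<le> t \<Longrightarrow> (g has_real_derivative g' t) (at t within {0..})"
    and g'': "\<And>t. 0 \<le> t \<Longrightarrow> (g' has_real_derivative g'' t) (at t within {0..})"
    and W: "W integrable_on {0..}" "\<And>t. 0 \<le> t \<Longrightarrow> \<bar>g'' t\<bar> \<le> W t"
    and g: "g integrable_on {0..}" "\<And>t. 0 \<le> t \<Longrightarrow> 0 \<le> g t"
  shows "summable (\<lambda>n. g (real (n + 1) * h))"
proof (rule bounded_imp_summable)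
  show "0 \<le> g (real (n + 1) * h)" for n using h by (intro g(2)) simp
  fix n
  define S where "S = (\<Sum>k<Suc n. g (real (k + 1) * h))"
  \<comment> \<open>The boundary term \<open>h g(N h) / 2\<close> is absorbed by \<open>h S / 2\<close>, as \<open>g(N h)\<close> is a summand of \<open>S\<close>.\<close>
  have "g (real (n + 1) * h) \<le> S"
    unfolding S_def using h by (intro member_le_sum g(2)) auto
  then have "h * g (real (Suc n) * h) \<le> h * S" using h by (simp add: mult_left_mono)
  moreover have "integral {0..real (Suc n) * h} g \<le> integral {0..} g"
    using g by (intro integral_subset_le integrable_on_subinterval[OF g(1)]) force+
  moreover have "h^2 / 8 * integral {0..real (Suc n) * h} W \<le> h^2 / 8 * integral {0..} W"
    using W by (intro mult_left_mono integral_subset_le integrable_on_subinterval[OF W(1)]) force+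
  moreover have "0 \<le> h * g 0" using h g(2)[of 0] by simp
  moreover have "h * (g 0 - g (real (Suc n) * h)) / 2 = h * g 0 / 2 - h * g (real (Suc n) * h) / 2"
    by (simp add: right_diff_distrib diff_divide_distrib)
  moreover have "\<bar>h * S + h * (g 0 - g (real (Suc n) * h)) / 2 - integral {0..real (Suc n) * h} g\<bar>
      \<le> h^2 / 8 * integral {0..real (Suc n) * h} W"
    unfolding S_def by (rule trapezoid_partial_sums_error[OF h g' g'' W])
  ultimately have "h * S \<le> h^2 / 4 * integral {0..} W + 2 * integral {0..} g"
    unfolding abs_le_iff by linarith
  then show "(\<Sum>k\<le>n. g (real (k + 1) * h)) \<le> (h^2 / 4 * integral {0..} W + 2 * integral {0..} g) / h"
    using h by (simp add: S_def lessThan_Suc_atMost field_simps)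
qed

lemma trapezoid_rule_error:
  fixes g g' g'' W :: "real \<Rightarrow> real" and h :: real
  assumes h: "0 < h"
    and g': "\<And>t. 0 \<le> t \<Longrightarrow> (g has_real_derivative g' t) (at t within {0..})"
    and g'': "\<And>t. 0 \<le> t \<Longrightarrow> (g' has_real_derivative g'' t) (at t within {0..})"
    and W: "W integrable_on {0..}" "\<And>t. 0 \<le> t \<Longrightarrow> \<bar>g'' t\<bar> \<le> W t"
    and g: "g integrable_on {0..}" "\<And>t. 0 \<le> t \<Longrightarrow> 0 \<le> g t" "(g \<longlongrightarrow> 0) at_top"
  shows "summable (\<lambda>n. g (real (n + 1) * h)) \<and>
    \<bar>(\<Sum>n. g (real (n + 1) * h)) - (integral {0..} g / h - g 0 / 2)\<bar> \<le> h / 8 * integral {0..} W"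
proof -
  have summable: "summable (\<lambda>n. g (real (n + 1) * h))"
    by (rule trapezoid_samples_summable[OF h g' g'' W g(1,2)])
  define E where "E N = h * (\<Sum>n<N. g (real (n + 1) * h)) + h * (g 0 - g (real N * h)) / 2
    - integral {0..real N * h} g" for N
  have E_bound: "\<bar>E N\<bar> \<le> h^2 / 8 * integral {0..} W" for N
  proof -
    have "h^2 / 8 * integral {0..real N * h} W \<le> h^2 / 8 * integral {0..} W"
      using W by (intro mult_left_mono integral_subset_le integrable_on_subinterval[OF W(1)]) force+
    then show ?thesis
      using trapezoid_partial_sums_error[OF h g' g'' W, of N] unfolding E_def by linarith
  qed
  have "LIM N sequentially. real N * h :> at_top"
    using filterlim_tendsto_pos_mult_at_top[OF tendsto_const h filterlim_real_sequentially]
    by (simp add: mult.commute)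
  then have "(\<lambda>N. g (real N * h)) \<longlonglongrightarrow> 0"
    by (rule filterlim_compose[OF g(3)])
  define F where "F = (\<Sum>n. g (real (n + 1) * h))"
  have "E \<longlonglongrightarrow> h * F + h * (g 0 - 0) / 2 - integral {0..} g"
    unfolding E_def[abs_def] F_def
    by (intro tendsto_intros summable_LIMSEQ \<open>(\<lambda>N. g (real N * h)) \<longlonglongrightarrow> 0\<close>
        tendsto_integral_initial_segments summable g h) simp
  then have "\<bar>h * F + h * (g 0 - 0) / 2 - integral {0..} g\<bar> \<le> h^2 / 8 * integral {0..} W"
    by (rule LIMSEQ_le_const2[OF tendsto_rabs]) (use E_bound in blast)
  moreover have "\<bar>h * F + h * g 0 / 2 - integral {0..} g\<bar> = h * \<bar>F - (integral {0..} g / h - g 0 / 2)\<bar>"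
    using h by (simp add: field_simps abs_mult[symmetric])
  ultimately show ?thesis
    using summable h unfolding F_def by (simp add: power2_eq_square field_simps)
qed

lemma sample_sum_le_integral_decreasing:
  fixes g :: "real \<Rightarrow> real" and h :: real
  assumes h: "0 < h" and g: "g integrable_on {0..}" "\<And>t. 0 \<le> t \<Longrightarrow> 0 \<le> g t"
    and decreasing: "\<And>x y. 0 \<le> x \<Longrightarrow> x \<le> y \<Longrightarrow> g y \<le> g x"
  shows "summable (\<lambda>n. g (real (n + 1) * h)) \<and> (\<Sum>n. g (real (n + 1) * h)) \<le> integral {0..} g / h"
proof -
  have g_segment: "g integrable_on {x..y}" if "0 \<le> x" for x y
    by (rule integrable_on_subinterval[OF g(1)]) (use that in auto)
  have partial: "h * (\<Sum>n<N. g (real (n + 1) * h)) \<le> integral {0..real N * h} g" for N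
  proof (induction N)
    case 0
    then show ?case by simp
  next
    case (Suc N)
    define a where "a = real N * h"
    define b where "b = real (Suc N) * h"
    have ab: "0 \<le> a" "a \<le> b" "b - a = h"
      using h by (auto simp: a_def b_def algebra_simps)
    have "integral {a..b} (\<lambda>_. g b) \<le> integral {a..b} g"
      using ab by (intro Henstock_Kurzweil_Integration.integral_le g_segment decreasing) auto
    then have "h * g b \<le> integral {a..b} g" using ab by simp
    moreover have "integral {0..b} g = integral {0..a} g + integral {a..b} g"
      by (rule Henstock_Kurzweil_Integration.integral_combine[OF ab(1,2) g_segment, symmetric]) simp
    moreover have "h * (\<Sum>n<Suc N. g (real (n + 1) * h)) = h * (\<Sum>n<N. g (real (n + 1) * h)) + h * g b"
      by (simp add: b_def distrib_left)
    ultimately show ?case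
      using Suc.IH unfolding a_def[symmetric] b_def[symmetric] by linarith
  qed
  have partial_le: "(\<Sum>n<N. g (real (n + 1) * h)) \<le> integral {0..} g / h" for N
  proof -
    have "integral {0..real N * h} g \<le> integral {0..} g"
      using g by (intro integral_subset_le g_segment) auto
    then show ?thesis using partial[of N] h by (simp add: field_simps)
  qed
  have summable: "summable (\<lambda>n. g (real (n + 1) * h))"
  proof (rule bounded_imp_summable)
    show "0 \<le> g (real (n + 1) * h)" for n using h by (intro g(2)) simp
    show "(\<Sum>k\<le>n. g (real (k + 1) * h)) \<le> integral {0..} g / h" for n
      using partial_le[of "Suc n"] by (simp only: lessThan_Suc_atMost)
  qed
  then show ?thesis using partial_le suminf_le_const by blast
qed

lemma power_eq_exp_gamma_s:
  assumes "0 < s" "\<gamma> < sqrt s"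
  shows "(1 - \<gamma> / sqrt s) ^ n = exp (- gamma_s s \<gamma> * (real n * (1 / sqrt s)))"
proof -
  have "0 < 1 - \<gamma> / sqrt s" using assms by simp
  moreover have "- gamma_s s \<gamma> * (real n * (1 / sqrt s)) = real n * ln (1 - \<gamma> / sqrt s)"
    using assms by (simp add: gamma_s_def)
  ultimately show ?thesis by (simp add: exp_of_nat_mult)
qed

lemma gamma_le_gamma_s:
  assumes "0 < s" "\<gamma> < sqrt s"
  shows "\<gamma> \<le> gamma_s s \<gamma>"
proof -
  have "ln (1 - \<gamma> / sqrt s) \<le> - \<gamma> / sqrt s"
    using ln_le_minus_one[of "1 - \<gamma> / sqrt s"] assms by simp
  then have "sqrt s * ln (1 - \<gamma> / sqrt s) \<le> - \<gamma>"
    using assms mult_left_mono[of _ _ "sqrt s"] by (fastforce simp: field_simps)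
  then show ?thesis by (simp add: gamma_s_def)
qed

lemma gamma_s_le_double:
  assumes "0 < s" "\<bar>\<gamma>\<bar> \<le> M" "2 * M \<le> sqrt s"
  shows "gamma_s s \<gamma> \<le> 2 * M"
proof -
  define \<rho> where "\<rho> = 1 - \<gamma> / sqrt s"
  have "\<gamma> / sqrt s \<le> 1 / 2"
    using assms by (simp add: field_simps)
  then have \<rho>: "1 / 2 \<le> \<rho>" by (simp add: \<rho>_def)
  have "- ln \<rho> \<le> inverse \<rho> - 1"
    using ln_le_minus_one[of "inverse \<rho>"] \<rho> by (simp add: ln_inverse)
  then have "sqrt s * (- ln \<rho>) \<le> sqrt s * (inverse \<rho> - 1)"
    by (rule mult_left_mono) (use assms(1) in simp)
  then have "gamma_s s \<gamma> \<le> sqrt s * (inverse \<rho> - 1)"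
    by (simp add: gamma_s_def \<rho>_def)
  also have "\<dots> = sqrt s * (1 - \<rho>) / \<rho>"
    using \<rho> by (simp add: field_simps)
  also have "\<dots> = \<gamma> / \<rho>"
    using assms(1) by (simp add: \<rho>_def)
  also have "\<dots> \<le> 2 * M"
  proof (cases "0 \<le> \<gamma>")
    case True
    then have "\<gamma> / \<rho> \<le> \<gamma> / (1 / 2)" using \<rho> by (intro divide_left_mono) auto
    then show ?thesis using assms(2) by simp
  next
    case False
    then show ?thesis using \<rho> assms(2) divide_nonpos_pos[of \<gamma> \<rho>] by linarith
  qed
  finally show ?thesis .
qed

locale control_profile =
  fixes f f' f'' :: "real \<Rightarrow> real"
  assumes nonneg: "\<And>x. 0 \<le> x \<Longrightarrow> 0 \<le> f x"
    and decreasing: "\<And>x y. 0 \<le> x \<Longrightarrow> x \<le> y \<Longrightarrow> f y \<le> f x"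
    and f_0: "f 0 = 1"
    and f': "\<And>x. 0 \<le> x \<Longrightarrow> (f has_real_derivative f' x) (at x within {0..})"
    and f'': "\<And>x. 0 \<le> x \<Longrightarrow> (f' has_real_derivative f'' x) (at x within {0..})"
    and weighted_integrable: "\<And>\<gamma>. gamma_min f < ereal \<gamma> \<Longrightarrow>
          (\<lambda>x. exp (- \<gamma> * x) * f x) absolutely_integrable_on {0..} \<and>
          (\<lambda>x. exp (- \<gamma> * x) * f' x) absolutely_integrable_on {0..} \<and>
          (\<lambda>x. exp (- \<gamma> * x) * f'' x) absolutely_integrable_on {0..}"
    and weighted_vanish: "\<And>\<gamma>. gamma_min f < ereal \<gamma> \<Longrightarrow> ((\<lambda>x. exp (- \<gamma> * x) * f x) \<longlongrightarrow> 0) at_top"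
begin

definition damped :: "real \<Rightarrow> real \<Rightarrow> real" where
  "damped c x = exp (- c * x) * f x"

text \<open>Dominates the second derivative \<open>exp (- c x) (f'' x - 2 c f' x + c\<^sup>2 f x)\<close> of \<open>damped c\<close>
  for all \<open>c\<close> with \<open>b \<le> c\<close> and \<open>\<bar>c\<bar> \<le> B\<close>.\<close>
definition majorant :: "real \<Rightarrow> real \<Rightarrow> real \<Rightarrow> real" where
  "majorant B b x = exp (- b * x) * (\<bar>f'' x\<bar> + 2 * B * \<bar>f' x\<bar> + B^2 * \<bar>f x\<bar>)"

lemma damped_integrable: "gamma_min f < ereal c \<Longrightarrow> damped c integrable_on {0..}"
  using weighted_integrable unfolding damped_def absolutely_integrable_on_def by blast

lemma integral_damped_nonneg: "0 \<le> integral {0..} (damped c)"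
  by (cases "damped c integrable_on {0..}")
     (auto intro!: integral_nonneg simp: damped_def nonneg not_integrable_integral)

lemma integral_damped_antimono:
  assumes a: "gamma_min f < ereal a" and "a \<le> c"
  shows "integral {0..} (damped c) \<le> integral {0..} (damped a)"
proof (rule Henstock_Kurzweil_Integration.integral_le)
  have "gamma_min f < ereal c" using a \<open>a \<le> c\<close> by (meson ereal_less_eq(3) less_le_trans)
  then show "damped c integrable_on {0..}" by (rule damped_integrable)
  show "damped a integrable_on {0..}" by (rule damped_integrable[OF a])
  fix x :: real assume "x \<in> {0..}"
  then have "exp (- c * x) \<le> exp (- a * x)" using \<open>a \<le> c\<close> by (simp add: mult_right_mono)
  then show "damped c x \<le> damped a x"
    unfolding damped_def using nonneg \<open>x \<in> {0..}\<close> by (simp add: mult_right_mono)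
qed

lemma laplace_eq_integral_damped:
  assumes "gamma_min f < ereal c"
  shows "enn2real (laplace f c) = integral {0..} (damped c)"
proof -
  have has_integral: "((\<lambda>x. exp (- c * x) * f x) has_integral integral {0..} (damped c)) {0..}"
    using integrable_integral[OF damped_integrable[OF assms]] by (simp add: damped_def[abs_def])
  have "laplace f c = ennreal (integral {0..} (damped c))"
    unfolding laplace_def by (rule nn_integral_has_integral_lebesgue'[OF _ has_integral]) (simp add: nonneg)
  then show ?thesis using integral_damped_nonneg by simp
qed

lemma majorant_integrable:
  assumes "gamma_min f < ereal b"
  shows "majorant B b integrable_on {0..}"
proof -
  have abs_weighted: "(\<lambda>x. exp (- b * x) * \<bar>g x\<bar>) integrable_on {0..}"
    if "(\<lambda>x. exp (- b * x) * g x) absolutely_integrable_on {0..}" for g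
    using that unfolding absolutely_integrable_on_def by (simp add: abs_mult)
  have "(\<lambda>x. exp (- b * x) * \<bar>f'' x\<bar> + (2 * B) *\<^sub>R (exp (- b * x) * \<bar>f' x\<bar>)
          + B^2 *\<^sub>R (exp (- b * x) * \<bar>f x\<bar>)) integrable_on {0..}"
    using weighted_integrable[OF assms]
    by (intro integrable_add integrable_cmul abs_weighted) auto
  then show ?thesis unfolding majorant_def[abs_def] by (simp add: algebra_simps)
qed

lemma integral_majorant_nonneg:
  "gamma_min f < ereal b \<Longrightarrow> 0 \<le> B \<Longrightarrow> 0 \<le> integral {0..} (majorant B b)"
  by (intro integral_nonneg majorant_integrable)
     (auto simp: majorant_def intro!: mult_nonneg_nonneg add_nonneg_nonneg)

lemma damped_second_derivative_le_majorant:
  assumes "0 \<le> x" "b \<le> c" "\<bar>c\<bar> \<le> B"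
  shows "\<bar>exp (- c * x) * (f'' x - 2 * c * f' x + c^2 * f x)\<bar> \<le> majorant B b x"
proof -
  have "\<bar>f'' x - 2 * c * f' x + c^2 * f x\<bar> \<le> \<bar>f'' x\<bar> + \<bar>2 * c * f' x\<bar> + \<bar>c^2 * f x\<bar>"
    by (smt (verit))
  also have "\<dots> = \<bar>f'' x\<bar> + 2 * \<bar>c\<bar> * \<bar>f' x\<bar> + c^2 * \<bar>f x\<bar>"
    by (simp add: abs_mult)
  also have "\<dots> \<le> \<bar>f'' x\<bar> + 2 * B * \<bar>f' x\<bar> + B^2 * \<bar>f x\<bar>"
  proof -
    have "c^2 \<le> B^2" using assms(3) by (metis abs_ge_zero power2_abs power_mono)
    then show ?thesis using assms(3) by (intro add_mono mult_right_mono) auto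
  qed
  finally have "\<bar>f'' x - 2 * c * f' x + c^2 * f x\<bar> \<le> \<bar>f'' x\<bar> + 2 * B * \<bar>f' x\<bar> + B^2 * \<bar>f x\<bar>" .
  moreover have "exp (- c * x) \<le> exp (- b * x)" using assms(1,2) by (simp add: mult_right_mono)
  ultimately show ?thesis
    unfolding majorant_def abs_mult by (intro mult_mono) auto
qed

lemma damped_sample_sum_error:
  assumes b: "gamma_min f < ereal b" and "b \<le> c" "\<bar>c\<bar> \<le> B" "0 < h"
  shows "summable (\<lambda>n. damped c (real (n + 1) * h)) \<and>
    \<bar>(\<Sum>n. damped c (real (n + 1) * h)) - (integral {0..} (damped c) / h - 1 / 2)\<bar>
      \<le> h / 8 * integral {0..} (majorant B b)"
proof -
  have c: "gamma_min f < ereal c" using b \<open>b \<le> c\<close> by (meson ereal_less_eq(3) less_le_trans)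
  have d1: "(damped c has_real_derivative exp (- c * t) * (f' t - c * f t)) (at t within {0..})"
    if "0 \<le> t" for t
    unfolding damped_def by (rule derivative_eq_intros f' that refl | simp add: algebra_simps)+
  have d2: "((\<lambda>x. exp (- c * x) * (f' x - c * f x)) has_real_derivative
      exp (- c * t) * (f'' t - 2 * c * f' t + c^2 * f t)) (at t within {0..})" if "0 \<le> t" for t
    by (rule derivative_eq_intros f' f'' that refl | simp add: algebra_simps power2_eq_square)+
  have "summable (\<lambda>n. damped c (real (n + 1) * h)) \<and>
    \<bar>(\<Sum>n. damped c (real (n + 1) * h)) - (integral {0..} (damped c) / h - damped c 0 / 2)\<bar>
      \<le> h / 8 * integral {0..} (majorant B b)"
  proof (rule trapezoid_rule_error[OF \<open>0 < h\<close> d1 d2 majorant_integrable[OF b]])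
    show "\<bar>exp (- c * t) * (f'' t - 2 * c * f' t + c^2 * f t)\<bar> \<le> majorant B b t" if "0 \<le> t" for t
      by (rule damped_second_derivative_le_majorant[OF that \<open>b \<le> c\<close> \<open>\<bar>c\<bar> \<le> B\<close>])
    show "damped c integrable_on {0..}" by (rule damped_integrable[OF c])
    show "0 \<le> damped c t" if "0 \<le> t" for t using nonneg[OF that] by (simp add: damped_def)
    show "(damped c \<longlongrightarrow> 0) at_top" unfolding damped_def[abs_def] by (rule weighted_vanish[OF c])
  qed
  moreover have "damped c 0 = 1" by (simp add: damped_def f_0)
  ultimately show ?thesis by simp
qed

lemma damped_sample_sum_le:
  assumes "gamma_min f < ereal c" "0 \<le> c" "0 < h"
  shows "summable (\<lambda>n. damped c (real (n + 1) * h)) \<and>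
    (\<Sum>n. damped c (real (n + 1) * h)) \<le> integral {0..} (damped c) / h"
proof (rule sample_sum_le_integral_decreasing[OF \<open>0 < h\<close> damped_integrable[OF assms(1)]])
  show "0 \<le> damped c t" if "0 \<le> t" for t using nonneg[OF that] by (simp add: damped_def)
  fix x y :: real assume "0 \<le> x" "x \<le> y"
  then have "exp (- c * y) \<le> exp (- c * x)" using \<open>0 \<le> c\<close> by (simp add: mult_left_mono)
  then show "damped c y \<le> damped c x"
    unfolding damped_def using \<open>0 \<le> x\<close> \<open>x \<le> y\<close> nonneg decreasing by (intro mult_mono) auto
qed

lemma damped_sample_sum_error_crude:
  assumes a: "gamma_min f < ereal a" and "a \<le> c" "0 \<le> c" "0 < h"
  shows "summable (\<lambda>n. damped c (real (n + 1) * h)) \<and>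
    \<bar>(\<Sum>n. damped c (real (n + 1) * h)) - (integral {0..} (damped c) / h - 1 / 2)\<bar>
      \<le> 1 / 2 + integral {0..} (damped a) / h"
proof -
  have "gamma_min f < ereal c" using a \<open>a \<le> c\<close> by (meson ereal_less_eq(3) less_le_trans)
  then have summable: "summable (\<lambda>n. damped c (real (n + 1) * h))"
    and upper: "(\<Sum>n. damped c (real (n + 1) * h)) \<le> integral {0..} (damped c) / h"
    using damped_sample_sum_le \<open>0 \<le> c\<close> \<open>0 < h\<close> by blast+
  have "0 \<le> damped c (real (n + 1) * h)" for n
    using \<open>0 < h\<close> nonneg[of "real (n + 1) * h"] by (simp add: damped_def)
  then have "0 \<le> (\<Sum>n. damped c (real (n + 1) * h))"
    by (rule suminf_nonneg[OF summable])
  moreover have "0 \<le> integral {0..} (damped c) / h"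
    using integral_damped_nonneg \<open>0 < h\<close> by simp
  moreover have "integral {0..} (damped c) / h \<le> integral {0..} (damped a) / h"
    using integral_damped_antimono[OF a \<open>a \<le> c\<close>] \<open>0 < h\<close> by (simp add: divide_right_mono)
  ultimately show ?thesis
    using summable upper by (simp add: abs_le_iff)
qed

lemma F_s_eq_damped_samples:
  assumes "0 < s" "\<gamma> < sqrt s"
  shows "(\<lambda>n. f (real (n + 1) / sqrt s) * (1 - \<gamma> / sqrt s) ^ (n + 1))
       = (\<lambda>n. damped (gamma_s s \<gamma>) (real (n + 1) * (1 / sqrt s)))"
  unfolding damped_def power_eq_exp_gamma_s[OF assms] by (simp add: mult.commute)

definition error_constant :: "real \<Rightarrow> real \<Rightarrow> real" where
  "error_constant a M = integral {0..} (majorant (max (2 * M) \<bar>a\<bar>) a) / 8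
     + M * (1 + 4 * M * integral {0..} (damped a))"

lemma error_constant_ge:
  assumes "gamma_min f < ereal a" "1 \<le> M"
  shows "integral {0..} (majorant (max (2 * M) \<bar>a\<bar>) a) / 8 \<le> error_constant a M"
    and "M * (1 + 4 * M * integral {0..} (damped a)) \<le> error_constant a M"
    and "M \<le> error_constant a M"
proof -
  have "0 \<le> integral {0..} (majorant (max (2 * M) \<bar>a\<bar>) a)"
    using assms by (intro integral_majorant_nonneg) auto
  moreover have "M \<le> M * (1 + 4 * M * integral {0..} (damped a))"
    using assms(2) integral_damped_nonneg[of a] by simp
  ultimately show "integral {0..} (majorant (max (2 * M) \<bar>a\<bar>) a) / 8 \<le> error_constant a M"
    and "M * (1 + 4 * M * integral {0..} (damped a)) \<le> error_constant a M"
    and "M \<le> error_constant a M"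
    using assms(2) unfolding error_constant_def by linarith+
qed

lemma damped_samples_error_bound:
  assumes a: "gamma_min f < ereal a" and M: "1 \<le> M" and s: "1 \<le> s"
    and \<gamma>: "a \<le> \<gamma>" "\<bar>\<gamma>\<bar> \<le> M" "\<gamma> < sqrt s"
  defines "c \<equiv> gamma_s s \<gamma>"
  shows "summable (\<lambda>n. damped c (real (n + 1) * (1 / sqrt s))) \<and>
    \<bar>(\<Sum>n. damped c (real (n + 1) * (1 / sqrt s))) - (integral {0..} (damped c) / (1 / sqrt s) - 1 / 2)\<bar>
      \<le> error_constant a M / sqrt s"
proof -
  have "a \<le> c" using gamma_le_gamma_s[OF _ \<gamma>(3)] s \<gamma>(1) by (simp add: c_def)
  have h: "0 < 1 / sqrt s" using s by simp
  show ?thesis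
  proof (cases "c \<le> 2 * M")
    case True
    \<comment> \<open>Moderate decay rate: the trapezoid estimate, with a majorant uniform in \<open>c\<close>.\<close>
    then have c_bound: "\<bar>c\<bar> \<le> max (2 * M) \<bar>a\<bar>" using \<open>a \<le> c\<close> by auto
    have "1 / sqrt s / 8 * integral {0..} (majorant (max (2 * M) \<bar>a\<bar>) a)
        = integral {0..} (majorant (max (2 * M) \<bar>a\<bar>) a) / 8 / sqrt s"
      by simp
    also have "\<dots> \<le> error_constant a M / sqrt s"
      by (rule divide_right_mono[OF error_constant_ge(1)[OF a M]]) (use s in simp)
    finally have "1 / sqrt s / 8 * integral {0..} (majorant (max (2 * M) \<bar>a\<bar>) a)
        \<le> error_constant a M / sqrt s" .
    with damped_sample_sum_error[OF a \<open>a \<le> c\<close> c_bound h]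
    show ?thesis by (meson order_trans)
  next
    case False
    \<comment> \<open>Fast decay rate: this forces \<open>sqrt s < 2 M\<close>, so a bound of order one suffices.\<close>
    then have "0 \<le> c" using M by linarith
    have small_s: "sqrt s < 2 * M"
      using False gamma_s_le_double[of s \<gamma> M] s \<gamma>(2) by (force simp: c_def)
    define I where "I = integral {0..} (damped a)"
    have "sqrt s * (1 / 2 + sqrt s * I) \<le> 2 * M * (1 / 2 + 2 * M * I)"
      using small_s s M integral_damped_nonneg[of a]
      by (intro mult_mono add_left_mono mult_right_mono) (auto simp: I_def)
    then have "1 / 2 + I / (1 / sqrt s) \<le> error_constant a M / sqrt s"
      using error_constant_ge(2)[OF a M] s by (simp add: I_def pos_le_divide_eq algebra_simps)
    with damped_sample_sum_error_crude[OF a \<open>a \<le> c\<close> \<open>0 \<le> c\<close> h, folded I_def]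
    show ?thesis by (meson order_trans)
  qed
qed

lemma F_s_error_bound:
  assumes a: "gamma_min f < ereal a" and M: "1 \<le> M" and s: "1 \<le> s"
    and \<gamma>: "a \<le> \<gamma>" "\<bar>\<gamma>\<bar> \<le> M" "\<gamma> \<le> sqrt s"
  shows "summable (\<lambda>n. f (real (n + 1) / sqrt s) * (1 - \<gamma> / sqrt s) ^ (n + 1)) \<and>
    \<bar>F_s f s (1 - \<gamma> / sqrt s)
      - ((if \<gamma> = sqrt s then 0 else sqrt s * enn2real (laplace f (gamma_s s \<gamma>))) - 1 / 2)\<bar>
      \<le> error_constant a M / sqrt s"
proof (cases "\<gamma> = sqrt s")
  case True
  then have "sqrt s / 2 \<le> error_constant a M"
    using \<gamma>(2) error_constant_ge(3)[OF a M] by linarith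
  then have "1 / 2 \<le> error_constant a M / sqrt s" using s by (simp add: field_simps)
  then show ?thesis using True s by (simp add: F_s_def)
next
  case False
  then have \<gamma>_less: "\<gamma> < sqrt s" using \<gamma>(3) by simp
  have "a \<le> gamma_s s \<gamma>" using gamma_le_gamma_s[OF _ \<gamma>_less] s \<gamma>(1) by simp
  then have "gamma_min f < ereal (gamma_s s \<gamma>)" using a by (meson ereal_less_eq(3) less_le_trans)
  then show ?thesis
    using damped_samples_error_bound[OF a M s \<gamma>(1,2) \<gamma>_less] F_s_eq_damped_samples[OF _ \<gamma>_less]
      laplace_eq_integral_damped False s
    by (simp add: F_s_def mult.commute)
qed

lemma F_s_uniform_error:
  assumes K: "compact K" "K \<subseteq> {\<gamma>. gamma_min f < ereal \<gamma>}"
  shows "\<exists>C. \<forall>s \<ge> 1. \<forall>\<gamma> \<in> K. \<gamma> \<le> sqrt s \<longrightarrow>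
           summable (\<lambda>n. f (real (n + 1) / sqrt s) * (1 - \<gamma> / sqrt s) ^ (n + 1)) \<and>
           \<bar>F_s f s (1 - \<gamma> / sqrt s)
             - ((if \<gamma> = sqrt s then 0 else sqrt s * enn2real (laplace f (gamma_s s \<gamma>))) - 1 / 2)\<bar>
             \<le> C / sqrt s"
proof (cases "K = {}")
  case False
  obtain a where "a \<in> K" and a_min: "\<And>\<gamma>. \<gamma> \<in> K \<Longrightarrow> a \<le> \<gamma>"
    using compact_attains_inf[OF K(1) False] by auto
  then have a: "gamma_min f < ereal a" using K(2) by auto
  obtain M\<^sub>0 where "\<And>\<gamma>. \<gamma> \<in> K \<Longrightarrow> \<bar>\<gamma>\<bar> \<le> M\<^sub>0"
    using compact_imp_bounded[OF K(1)] unfolding bounded_real by auto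
  then have M: "\<And>\<gamma>. \<gamma> \<in> K \<Longrightarrow> \<bar>\<gamma>\<bar> \<le> max 1 M\<^sub>0" by fastforce
  show ?thesis
    by (intro exI[of _ "error_constant a (max 1 M\<^sub>0)"] allI impI ballI F_s_error_bound[OF a])
       (auto intro: a_min M)
qed simp

end

theorem theorem4p1:
  fixes f :: "real \<Rightarrow> real" and Df :: "nat \<Rightarrow> real \<Rightarrow> real"
  assumes nonneg: "\<And>x. 0 \<le> x \<Longrightarrow> 0 \<le> f x"
    and nonincr: "\<And>x y. 0 \<le> x \<Longrightarrow> x \<le> y \<Longrightarrow> f y \<le> f x"
    and f0: "f 0 = 1"
    and Df0: "Df 0 = f"
    and Df_deriv: "\<And>j x. j < 4 \<Longrightarrow> 0 \<le> x \<Longrightarrow>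
                     (Df j has_real_derivative Df (Suc j) x) (at x within {0..})"
    and Df4_cont: "continuous_on {0..} (Df 4)"
    and integrable: "\<And>\<gamma> j. gamma_min f < ereal \<gamma> \<Longrightarrow> j \<le> 4 \<Longrightarrow>
                     (\<lambda>x. exp (- \<gamma> * x) * Df j x) absolutely_integrable_on {0..}"
    and vanish: "\<And>\<gamma> j. gamma_min f < ereal \<gamma> \<Longrightarrow> j \<le> 4 \<Longrightarrow>
                     ((\<lambda>x. exp (- \<gamma> * x) * Df j x) \<longlongrightarrow> 0) at_top"
  shows "\<forall>K. compact K \<and> K \<subseteq> {\<gamma>. gamma_min f < ereal \<gamma>} \<longrightarrow>
           (\<exists>C. \<forall>s \<ge> 1. \<forall>\<gamma> \<in> K. \<gamma> \<le> sqrt s \<longrightarrow>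
              summable (\<lambda>n. f (real (n + 1) / sqrt s) * (1 - \<gamma> / sqrt s) ^ (n + 1)) \<and>
              \<bar>F_s f s (1 - \<gamma> / sqrt s)
                - ((if \<gamma> = sqrt s then 0 else sqrt s * enn2real (laplace f (gamma_s s \<gamma>))) - 1 / 2)\<bar>
                \<le> C / sqrt s)"
proof -
  interpret control_profile f "Df 1" "Df 2"
  proof
    show "(f has_real_derivative Df 1 x) (at x within {0..})" if "0 \<le> x" for x
      using Df_deriv[of 0 x] Df0 that by simp
    show "(Df 1 has_real_derivative Df 2 x) (at x within {0..})" if "0 \<le> x" for x
      using Df_deriv[of 1 x] that by (simp add: numeral_2_eq_2)
    show "(\<lambda>x. exp (- \<gamma> * x) * f x) absolutely_integrable_on {0..} \<and>
        (\<lambda>x. exp (- \<gamma> * x) * Df 1 x) absolutely_integrable_on {0..} \<and>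
        (\<lambda>x. exp (- \<gamma> * x) * Df 2 x) absolutely_integrable_on {0..}"
      if "gamma_min f < ereal \<gamma>" for \<gamma>
      using integrable[OF that, of 0] integrable[OF that, of 1] integrable[OF that, of 2] Df0 by simp
    show "((\<lambda>x. exp (- \<gamma> * x) * f x) \<longlongrightarrow> 0) at_top" if "gamma_min f < ereal \<gamma>" for \<gamma>
      using vanish[OF that, of 0] Df0 by simp
  qed (fact nonneg nonincr f0)+
  show ?thesis by (intro allI impI F_s_uniform_error) auto
qed

end
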